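(* Under the standing setup, let $g,\tilde g,h,\tilde h$ satisfy $1\ge g\ge\tilde g\ge0$ and $1\ge h\ge\tilde h\ge0$. If $q(g,h)\ge0$ and $m(\tilde g,\tilde h)\ge0$, then $f(g,h)\ge f(\tilde g,\tilde h)$.
   Context: Standing setup. Fix $n\in\mathbb N$ and $W=[w_{ij}]\in\mathbb R^{n\times n}$ with $w_{ij}\ge0$, $w_{ii}=0$. Let $\|W\|_\infty=\max_i\sum_j|w_{ij}|$, $\|W\|_1=\max_j\sum_i|w_{ij}|$, let $\lambda$ be the spectral radius of $W$, and assume there is $c\in\mathbb R^n$ with all entries positive and $W^\top c=\lambda c$. Fix $\beta\ge\gamma\ge0$ with $1-\max\{\|W\|_\infty,\|W\|_1\}>\max\{2\beta,4\gamma\}$. Fix $s\in[0,1]^n$; set $\widehat c_i=c_i/\sum_jc_j$, $\widehat s=\sum_i\widehat c_is_i$, $\chi=\sum_i\widehat c_is_i\sum_jw_{ij}$. For $g,h\in[0,1]$ define $$f(g,h)=\frac{(1-2\beta+(h-g)\gamma)\widehat s-\chi+(h+g)\beta+(g^2-h^2)\gamma}{1-\lambda+(g-h)\gamma}\,c^\top\mathbf 1,$$ $$q(g,h)=(\beta+\gamma\widehat s-2\gamma h)(1-\lambda+\gamma g)+\gamma\big[(1-2\beta-g\gamma)\widehat s-\chi+g\beta+g^2\gamma\big]+\gamma^2h^2,$$ $$m(g,h)=(\beta-\gamma\widehat s+2\gamma g)(1-\lambda-h\gamma)+g^2\gamma^2-\gamma\big[(1-2\beta+h\gamma)\widehat s+h\beta-h^2\gamma-\chi\big].$$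 *)

theory Defs
  imports Complex_Main "Jordan_Normal_Form.Spectral_Radius"
begin

definition spec_rad :: "real mat \<Rightarrow> real" where
  "spec_rad W = spectral_radius (map_mat complex_of_real W)"

definition norm_inf_mat :: "nat \<Rightarrow> real mat \<Rightarrow> real" where
  "norm_inf_mat n W = Max {(\<Sum>j<n. \<bar>W $$ (i,j)\<bar>) | i. i < n}"

definition norm_one_mat :: "nat \<Rightarrow> real mat \<Rightarrow> real" where
  "norm_one_mat n W = Max {(\<Sum>i<n. \<bar>W $$ (i,j)\<bar>) | j. j < n}"

definition c_hat :: "nat \<Rightarrow> real vec \<Rightarrow> nat \<Rightarrow> real" where
  "c_hat n c i = c $ i / (\<Sum>j<n. c $ j)"

definition s_hat :: "nat \<Rightarrow> real vec \<Rightarrow> real vec \<Rightarrow> real" where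
  "s_hat n c s = (\<Sum>i<n. c_hat n c i * s $ i)"

definition chi :: "nat \<Rightarrow> real mat \<Rightarrow> real vec \<Rightarrow> real vec \<Rightarrow> real" where
  "chi n W c s = (\<Sum>i<n. c_hat n c i * s $ i * (\<Sum>j<n. W $$ (i,j)))"

definition c_tot :: "nat \<Rightarrow> real vec \<Rightarrow> real" where
  "c_tot n c = (\<Sum>i<n. c $ i)"

definition f_fun :: "nat \<Rightarrow> real mat \<Rightarrow> real vec \<Rightarrow> real vec \<Rightarrow> real \<Rightarrow> real \<Rightarrow> real \<Rightarrow> real \<Rightarrow> real" where
  "f_fun n W c s \<beta> \<gamma> g h =
     (let lam = spec_rad W; sh = s_hat n c s; \<chi> = chi n W c s in
      ((1 - 2*\<beta> + (h - g)*\<gamma>) * sh - \<chi> + (h + g)*\<beta> + (g^2 - h^2)*\<gamma>)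
        / (1 - lam + (g - h)*\<gamma>) * c_tot n c)"

definition q_fun :: "nat \<Rightarrow> real mat \<Rightarrow> real vec \<Rightarrow> real vec \<Rightarrow> real \<Rightarrow> real \<Rightarrow> real \<Rightarrow> real \<Rightarrow> real" where
  "q_fun n W c s \<beta> \<gamma> g h =
     (let lam = spec_rad W; sh = s_hat n c s; \<chi> = chi n W c s in
      (\<beta> + \<gamma>*sh - 2*\<gamma>*h) * (1 - lam + \<gamma>*g)
      + \<gamma> * ((1 - 2*\<beta> - g*\<gamma>)*sh - \<chi> + g*\<beta> + g^2*\<gamma>) + \<gamma>^2 * h^2)"

definition m_fun :: "nat \<Rightarrow> real mat \<Rightarrow> real vec \<Rightarrow> real vec \<Rightarrow> real \<Rightarrow> real \<Rightarrow> real \<Rightarrow> real \<Rightarrow> real" where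
  "m_fun n W c s \<beta> \<gamma> g h =
     (let lam = spec_rad W; sh = s_hat n c s; \<chi> = chi n W c s in
      (\<beta> - \<gamma>*sh + 2*\<gamma>*g) * (1 - lam - h*\<gamma>) + g^2*\<gamma>^2
      - \<gamma> * ((1 - 2*\<beta> + h*\<gamma>)*sh + h*\<beta> - h^2*\<gamma> - \<chi>))"

end

theory Submission
  imports Defs
begin

text \<open>Write \<open>f = N/D \<cdot> c\<^sup>T1\<close>. Cross-multiplying, \<open>N(g,h) D(g,h') - N(g,h') D(g,h)\<close> factors
  as \<open>(h - h')(q(g,h) + \<gamma>(h - h') D(g,h))\<close>, and \<open>N(g,h') D(g',h') - N(g',h') D(g,h')\<close> as
  \<open>(g - g')(m(g',h') + \<gamma>(g - g') D(g',h'))\<close>. Since \<open>\<lambda> \<le> \<parallel>W\<parallel>\<^sub>\<infinity>\<close> (the left Perron vector \<open>c\<close>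
  is positive) the hypotheses give \<open>\<lambda> + \<gamma> < 1\<close>, so all denominators are positive, and
  \<open>f(g',h') \<le> f(g,h') \<le> f(g,h)\<close>.\<close>

definition f_num :: "real \<Rightarrow> real \<Rightarrow> real \<Rightarrow> real \<Rightarrow> real \<Rightarrow> real \<Rightarrow> real" where
  "f_num \<beta> \<gamma> \<sigma> \<chi> g h = (1 - 2*\<beta> + (h - g)*\<gamma>) * \<sigma> - \<chi> + (h + g)*\<beta> + (g^2 - h^2)*\<gamma>"

definition f_den :: "real \<Rightarrow> real \<Rightarrow> real \<Rightarrow> real \<Rightarrow> real" where
  "f_den \<rho> \<gamma> g h = 1 - \<rho> + (g - h)*\<gamma>"

definition q_poly :: "real \<Rightarrow> real \<Rightarrow> real \<Rightarrow> real \<Rightarrow> real \<Rightarrow> real \<Rightarrow> real \<Rightarrow> real" where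
  "q_poly \<beta> \<gamma> \<sigma> \<chi> \<rho> g h = (\<beta> + \<gamma>*\<sigma> - 2*\<gamma>*h) * (1 - \<rho> + \<gamma>*g)
      + \<gamma> * ((1 - 2*\<beta> - g*\<gamma>)*\<sigma> - \<chi> + g*\<beta> + g^2*\<gamma>) + \<gamma>^2 * h^2"

definition m_poly :: "real \<Rightarrow> real \<Rightarrow> real \<Rightarrow> real \<Rightarrow> real \<Rightarrow> real \<Rightarrow> real \<Rightarrow> real" where
  "m_poly \<beta> \<gamma> \<sigma> \<chi> \<rho> g h = (\<beta> - \<gamma>*\<sigma> + 2*\<gamma>*g) * (1 - \<rho> - h*\<gamma>) + g^2*\<gamma>^2
      - \<gamma> * ((1 - 2*\<beta> + h*\<gamma>)*\<sigma> + h*\<beta> - h^2*\<gamma> - \<chi>)"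

lemma f_num_cross_diff_h:
  "f_num \<beta> \<gamma> \<sigma> \<chi> g h * f_den \<rho> \<gamma> g h' - f_num \<beta> \<gamma> \<sigma> \<chi> g h' * f_den \<rho> \<gamma> g h
     = (h - h') * (q_poly \<beta> \<gamma> \<sigma> \<chi> \<rho> g h + \<gamma> * (h - h') * f_den \<rho> \<gamma> g h)"
  unfolding f_num_def f_den_def q_poly_def by (simp add: algebra_simps power2_eq_square)

lemma f_num_cross_diff_g:
  "f_num \<beta> \<gamma> \<sigma> \<chi> g h * f_den \<rho> \<gamma> g' h - f_num \<beta> \<gamma> \<sigma> \<chi> g' h * f_den \<rho> \<gamma> g h
     = (g - g') * (m_poly \<beta> \<gamma> \<sigma> \<chi> \<rho> g' h + \<gamma> * (g - g') * f_den \<rho> \<gamma> g' h)"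
  unfolding f_num_def f_den_def m_poly_def by (simp add: algebra_simps power2_eq_square)

lemma f_den_pos:
  assumes "\<rho> + \<gamma> < 1" "\<gamma> \<ge> 0" "0 \<le> g" "g \<le> 1" "0 \<le> h" "h \<le> 1"
  shows "f_den \<rho> \<gamma> g h > 0"
proof -
  have "(g - h) * \<gamma> \<ge> -1 * \<gamma>"
    using assms by (intro mult_right_mono) auto
  then show ?thesis
    using assms(1) unfolding f_den_def by linarith
qed

lemma f_ratio_mono_h:
  assumes "\<rho> + \<gamma> < 1" "\<gamma> \<ge> 0" "0 \<le> g" "g \<le> 1" "0 \<le> h'" "h' \<le> h" "h \<le> 1"
    and "q_poly \<beta> \<gamma> \<sigma> \<chi> \<rho> g h \<ge> 0"
  shows "f_num \<beta> \<gamma> \<sigma> \<chi> g h' / f_den \<rho> \<gamma> g h' \<le> f_num \<beta> \<gamma> \<sigma> \<chi> g h / f_den \<rho> \<gamma> g h"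
proof -
  have D: "f_den \<rho> \<gamma> g h > 0" "f_den \<rho> \<gamma> g h' > 0"
    using assms by (auto intro: f_den_pos)
  have "f_num \<beta> \<gamma> \<sigma> \<chi> g h * f_den \<rho> \<gamma> g h' - f_num \<beta> \<gamma> \<sigma> \<chi> g h' * f_den \<rho> \<gamma> g h \<ge> 0"
    unfolding f_num_cross_diff_h using assms D by (intro mult_nonneg_nonneg add_nonneg_nonneg) auto
  then show ?thesis
    using D by (simp add: divide_simps)
qed

lemma f_ratio_mono_g:
  assumes "\<rho> + \<gamma> < 1" "\<gamma> \<ge> 0" "0 \<le> g'" "g' \<le> g" "g \<le> 1" "0 \<le> h" "h \<le> 1"
    and "m_poly \<beta> \<gamma> \<sigma> \<chi> \<rho> g' h \<ge> 0"
  shows "f_num \<beta> \<gamma> \<sigma> \<chi> g' h / f_den \<rho> \<gamma> g' h \<le> f_num \<beta> \<gamma> \<sigma> \<chi> g h / f_den \<rho> \<gamma> g h"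
proof -
  have D: "f_den \<rho> \<gamma> g h > 0" "f_den \<rho> \<gamma> g' h > 0"
    using assms by (auto intro: f_den_pos)
  have "f_num \<beta> \<gamma> \<sigma> \<chi> g h * f_den \<rho> \<gamma> g' h - f_num \<beta> \<gamma> \<sigma> \<chi> g' h * f_den \<rho> \<gamma> g h \<ge> 0"
    unfolding f_num_cross_diff_g using assms D by (intro mult_nonneg_nonneg add_nonneg_nonneg) auto
  then show ?thesis
    using D by (simp add: divide_simps)
qed

lemma f_fun_eq:
  "f_fun n W c s \<beta> \<gamma> g h
     = f_num \<beta> \<gamma> (s_hat n c s) (chi n W c s) g h / f_den (spec_rad W) \<gamma> g h * c_tot n c"
  unfolding f_fun_def f_num_def f_den_def Let_def ..

lemma q_fun_eq: "q_fun n W c s \<beta> \<gamma> g h = q_poly \<beta> \<gamma> (s_hat n c s) (chi n W c s) (spec_rad W) g h"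
  unfolding q_fun_def q_poly_def Let_def ..

lemma m_fun_eq: "m_fun n W c s \<beta> \<gamma> g h = m_poly \<beta> \<gamma> (s_hat n c s) (chi n W c s) (spec_rad W) g h"
  unfolding m_fun_def m_poly_def Let_def ..

text \<open>Pairing \<open>W\<^sup>T c = \<rho> c\<close> with the all-ones vector gives \<open>\<rho> \<Sum> c\<^sub>j = \<Sum>\<^sub>i c\<^sub>i \<Sum>\<^sub>j w\<^sub>i\<^sub>j\<close>,
  so \<open>\<rho>\<close> is a \<open>c\<close>-weighted average of the row sums.\<close>
lemma left_eigenvalue_le_norm_inf_mat:
  fixes W :: "real mat" and c :: "real vec"
  assumes W: "W \<in> carrier_mat n n" and c: "c \<in> carrier_vec n"
    and c_pos: "\<forall>i<n. c $ i > 0" and "n > 0"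
    and eig: "transpose_mat W *\<^sub>v c = \<rho> \<cdot>\<^sub>v c"
  shows "\<rho> \<le> norm_inf_mat n W"
proof -
  have col: "(\<Sum>i<n. W $$ (i,j) * c $ i) = \<rho> * c $ j" if "j < n" for j
  proof -
    have "(transpose_mat W *\<^sub>v c) $ j = (\<Sum>i<n. W $$ (i,j) * c $ i)"
      using that W c by (simp add: scalar_prod_def atLeast0LessThan mult.commute)
    then show ?thesis
      using eig that c by simp
  qed
  have row: "(\<Sum>j<n. W $$ (i,j)) \<le> norm_inf_mat n W" if "i < n" for i
  proof -
    have "(\<Sum>j<n. W $$ (i,j)) \<le> (\<Sum>j<n. \<bar>W $$ (i,j)\<bar>)"
      by (intro sum_mono) simp
    also have "\<dots> \<le> norm_inf_mat n W"
      unfolding norm_inf_mat_def using that by (intro Max_ge) auto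
    finally show ?thesis .
  qed
  have "\<rho> * (\<Sum>j<n. c $ j) = (\<Sum>j<n. \<Sum>i<n. W $$ (i,j) * c $ i)"
    using col by (simp add: sum_distrib_left)
  also have "\<dots> = (\<Sum>i<n. c $ i * (\<Sum>j<n. W $$ (i,j)))"
    by (subst sum.swap) (simp add: sum_distrib_left mult.commute)
  also have "\<dots> \<le> (\<Sum>i<n. c $ i * norm_inf_mat n W)"
    using row c_pos by (intro sum_mono mult_left_mono) (auto simp: less_imp_le)
  also have "\<dots> = norm_inf_mat n W * (\<Sum>j<n. c $ j)"
    by (simp add: sum_distrib_left mult.commute)
  finally have "\<rho> * (\<Sum>j<n. c $ j) \<le> norm_inf_mat n W * (\<Sum>j<n. c $ j)" .
  moreover have "(\<Sum>j<n. c $ j) > 0"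
    using c_pos \<open>n > 0\<close> by (intro sum_pos) auto
  ultimately show ?thesis
    by simp
qed

theorem lemma4:
  fixes n :: nat and W :: "real mat" and c s :: "real vec"
    and \<beta> \<gamma> g g' h h' :: real
  assumes W: "W \<in> carrier_mat n n"
    and W_nonneg: "\<forall>i<n. \<forall>j<n. W $$ (i,j) \<ge> 0"
    and W_diag: "\<forall>i<n. W $$ (i,i) = 0"
    and c: "c \<in> carrier_vec n"
    and c_pos: "\<forall>i<n. c $ i > 0"
    and c_eig: "transpose_mat W *\<^sub>v c = spec_rad W \<cdot>\<^sub>v c"
    and \<beta>\<gamma>: "\<beta> \<ge> \<gamma>" "\<gamma> \<ge> 0"
    and norm_bound: "1 - max (norm_inf_mat n W) (norm_one_mat n W) > max (2*\<beta>) (4*\<gamma>)"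
    and s: "s \<in> carrier_vec n"
    and s_range: "\<forall>i<n. 0 \<le> s $ i \<and> s $ i \<le> 1"
    and g_ord: "1 \<ge> g" "g \<ge> g'" "g' \<ge> 0"
    and h_ord: "1 \<ge> h" "h \<ge> h'" "h' \<ge> 0"
    and q_nonneg: "q_fun n W c s \<beta> \<gamma> g h \<ge> 0"
    and m_nonneg: "m_fun n W c s \<beta> \<gamma> g' h' \<ge> 0"
  shows "f_fun n W c s \<beta> \<gamma> g h \<ge> f_fun n W c s \<beta> \<gamma> g' h'"
proof (cases "n = 0")
  case True
  then show ?thesis
    unfolding f_fun_def c_tot_def by simp
next
  case False
  have "spec_rad W \<le> norm_inf_mat n W"
    using False by (intro left_eigenvalue_le_norm_inf_mat[OF W c c_pos _ c_eig]) simp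
  then have lam: "spec_rad W + \<gamma> < 1"
    using norm_bound \<beta>\<gamma> by linarith
  have "f_num \<beta> \<gamma> (s_hat n c s) (chi n W c s) g' h' / f_den (spec_rad W) \<gamma> g' h'
      \<le> f_num \<beta> \<gamma> (s_hat n c s) (chi n W c s) g h' / f_den (spec_rad W) \<gamma> g h'"
    using g_ord h_ord m_nonneg unfolding m_fun_eq by (intro f_ratio_mono_g[OF lam \<beta>\<gamma>(2)]) auto
  also have "\<dots> \<le> f_num \<beta> \<gamma> (s_hat n c s) (chi n W c s) g h / f_den (spec_rad W) \<gamma> g h"
    using g_ord h_ord q_nonneg unfolding q_fun_eq by (intro f_ratio_mono_h[OF lam \<beta>\<gamma>(2)]) auto
  finally show ?thesis
    unfolding f_fun_eq c_tot_def using c_pos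
    by (intro mult_right_mono sum_nonneg) (auto simp: less_imp_le)
qed

end
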